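(* In the setting of the context, $f(a,b)=\rho(h_{ab})-\rho(h_a)-\rho(h_b)$ for all $a,b\in A$.
   Context: Conventions: $[x,y]=x^{-1}y^{-1}xy$; $G$ acts on $V$ on the right, $[v,g]=-v+vg$; $[X,Y]$ is the subgroup generated by commutators, $[X,Y,Z]=[[X,Y],Z]$; $A^\#=A\setminus\{1\}$. Setting: $G=\langle A,B\rangle$ is an abstract rank one group with unipotent subgroups $A,B$ (distinct nilpotent; for each $a\in A^\#$ some $b(a)\in B^\#$ with $B^a=A^{b(a)}$, and vice versa). $\mu_a=b(a^{-1})ab(a)^{-1}$, $H=\langle\mu_a\mu_c:a,c\in A^\#\rangle$. $V$ is a $\mathbb{Z}G$-module with $[V,A,A,A]=0$, $[V,G,G,G]\neq0$, $[V,G]=V$, $C_V(G)=0$. $A_0=C_A([V,A])\cap C_A(V/C_V(A))\neq1$. Fix $e\in A_0^\#$ (with $e=a^2$ for some $a\in A$ if $V$ has exponent 2 and $A$ is non-abelian), $\mu=\mu_{e^{-1}}$, $h_a=\mu\mu_a$ for $a\in A^\#$, $h_1=0$; $\rho(h)$ = restriction of $h\in H$ to $C_V(A)$, $\rho(h_1)=0$. $f:A\times A\to\mathrm{End}(C_V(A))$ is defined by $vf(a,b)=[v\mu,a,b]$ for $v\in C_V(A)$. *)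

theory Defs
  imports "HOL-Algebra.Algebra"
begin

definition gcomm :: "('g,'m) monoid_scheme \<Rightarrow> 'g \<Rightarrow> 'g \<Rightarrow> 'g" where
  "gcomm G x y = inv\<^bsub>G\<^esub> x \<otimes>\<^bsub>G\<^esub> inv\<^bsub>G\<^esub> y \<otimes>\<^bsub>G\<^esub> x \<otimes>\<^bsub>G\<^esub> y"

fun lower_central :: "('g,'m) monoid_scheme \<Rightarrow> 'g set \<Rightarrow> nat \<Rightarrow> 'g set" where
  "lower_central G H 0 = H"
| "lower_central G H (Suc n) =
     generate G {gcomm G x y | x y. x \<in> lower_central G H n \<and> y \<in> H}"

definition nilpotent_subgroup :: "('g,'m) monoid_scheme \<Rightarrow> 'g set \<Rightarrow> bool" where
  "nilpotent_subgroup G H \<longleftrightarrow> subgroup H G \<and> (\<exists>n. lower_central G H n = {one G})"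

definition conjset :: "('g,'m) monoid_scheme \<Rightarrow> 'g set \<Rightarrow> 'g \<Rightarrow> 'g set" where
  "conjset G S g = (\<lambda>x. inv\<^bsub>G\<^esub> g \<otimes>\<^bsub>G\<^esub> x \<otimes>\<^bsub>G\<^esub> g) ` S"

definition rank_one_group ::
  "('g,'m) monoid_scheme \<Rightarrow> 'g set \<Rightarrow> 'g set \<Rightarrow> ('g \<Rightarrow> 'g) \<Rightarrow> bool" where
  "rank_one_group G A B bf \<longleftrightarrow>
     group G \<and> A \<subseteq> carrier G \<and> B \<subseteq> carrier G \<and>
     carrier G = generate G (A \<union> B) \<and> A \<noteq> B \<and>
     nilpotent_subgroup G A \<and> nilpotent_subgroup G B \<and>
     (\<forall>a \<in> A - {one G}. bf a \<in> B - {one G} \<and> conjset G B a = conjset G A (bf a)) \<and>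
     (\<forall>b \<in> B - {one G}. \<exists>a \<in> A - {one G}. conjset G A b = conjset G B a)"

definition mu :: "('g,'m) monoid_scheme \<Rightarrow> ('g \<Rightarrow> 'g) \<Rightarrow> 'g \<Rightarrow> 'g" where
  "mu G bf a = bf (inv\<^bsub>G\<^esub> a) \<otimes>\<^bsub>G\<^esub> a \<otimes>\<^bsub>G\<^esub> inv\<^bsub>G\<^esub> (bf a)"

definition right_module :: "('g,'m) monoid_scheme \<Rightarrow> ('v::ab_group_add \<Rightarrow> 'g \<Rightarrow> 'v) \<Rightarrow> bool" where
  "right_module G act \<longleftrightarrow>
     (\<forall>v. act v (one G) = v) \<and>
     (\<forall>v. \<forall>g \<in> carrier G. \<forall>h \<in> carrier G. act (act v g) h = act v (g \<otimes>\<^bsub>G\<^esub> h)) \<and>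
     (\<forall>v w. \<forall>g \<in> carrier G. act (v + w) g = act v g + act w g)"

definition vcomm :: "('v::ab_group_add \<Rightarrow> 'g \<Rightarrow> 'v) \<Rightarrow> 'v \<Rightarrow> 'g \<Rightarrow> 'v" where
  "vcomm act v g = - v + act v g"

inductive_set addgen :: "'v::ab_group_add set \<Rightarrow> 'v set" for S where
  zero: "0 \<in> addgen S"
| gen: "s \<in> S \<Longrightarrow> s \<in> addgen S"
| diff: "x \<in> addgen S \<Longrightarrow> y \<in> addgen S \<Longrightarrow> x - y \<in> addgen S"

definition vcomm_set :: "('v::ab_group_add \<Rightarrow> 'g \<Rightarrow> 'v) \<Rightarrow> 'v set \<Rightarrow> 'g set \<Rightarrow> 'v set" where
  "vcomm_set act S Y = addgen {vcomm act x y | x y. x \<in> S \<and> y \<in> Y}"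

definition vcent :: "('v \<Rightarrow> 'g \<Rightarrow> 'v) \<Rightarrow> 'v set \<Rightarrow> 'g set \<Rightarrow> 'v set" where
  "vcent act W Y = {v \<in> W. \<forall>y \<in> Y. act v y = v}"

text \<open>A_0 = C_A([V,A]) \<inter> C_A(V/C_V(A)).\<close>
definition A0 :: "('v::ab_group_add \<Rightarrow> 'g \<Rightarrow> 'v) \<Rightarrow> 'g set \<Rightarrow> 'g set" where
  "A0 act A = {a \<in> A. (\<forall>w \<in> vcomm_set act UNIV A. act w a = w)
                     \<and> (\<forall>v. act v a - v \<in> vcent act UNIV A)}"

text \<open>rho(h_a): for a \<noteq> 1 the action of h_a = mu mu_a on C_V(A); rho(h_1) = 0.\<close>
definition rho_h :: "('g,'m) monoid_scheme \<Rightarrow> ('v::ab_group_add \<Rightarrow> 'g \<Rightarrow> 'v) \<Rightarrow> ('g \<Rightarrow> 'g)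
     \<Rightarrow> 'g \<Rightarrow> 'g \<Rightarrow> 'v \<Rightarrow> 'v" where
  "rho_h G act bf m a v = (if a = (one G) then 0 else act v (m \<otimes>\<^bsub>G\<^esub> mu G bf a))"

end

theory Submission
  imports Defs
begin

text \<open>Put \<open>w = v\<mu>\<close>; since \<open>A\<^sup>\<mu> = B\<close>, \<open>w\<close> is centralised by \<open>B\<close>, and
  \<open>b\<^sub>0 = e\<^sup>\<mu>\<close> is a nontrivial element of \<open>B\<close> centralising \<open>[V,B] = [V,A]\<mu>\<close>.
  For \<open>x \<in> A\<close> the vector \<open>D(x) = [w,x] - v\<rho>(h\<^sub>x)\<close> is then centralised by \<open>b\<^sub>0\<close>,
  and \<open>[w,a,b] - (v\<rho>(h\<^sub>a\<^sub>b) - v\<rho>(h\<^sub>a) - v\<rho>(h\<^sub>b)) = D(ab) - D(a) - D(b)\<close>.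
  This defect is also centralised by \<open>A\<close>: \<open>[V,A,A,A] = 0\<close>, and \<open>v\<rho>(h\<^sub>x) = w\<mu>\<^sub>x\<close>
  where \<open>\<mu>\<^sub>x\<close> conjugates \<open>B\<close> onto \<open>A\<close>. As \<open>A\<close> and any element of \<open>B\<^sup>#\<close> generate \<open>G\<close>, the defect lies in
  \<open>C\<^sub>V(G) = 0\<close>.\<close>

lemma vcomm_mem_vcomm_set: "x \<in> S \<Longrightarrow> g \<in> Y \<Longrightarrow> vcomm act x g \<in> vcomm_set act S Y"
  unfolding vcomm_set_def by (blast intro: addgen.gen)

context group
begin

lemma conjset_closed: "S \<subseteq> carrier G \<Longrightarrow> g \<in> carrier G \<Longrightarrow> conjset G S g \<subseteq> carrier G"
  unfolding conjset_def by auto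

lemma conjset_mult:
  assumes "S \<subseteq> carrier G" "g \<in> carrier G" "h \<in> carrier G"
  shows "conjset G (conjset G S g) h = conjset G S (g \<otimes> h)"
  unfolding conjset_def image_image
  using assms by (intro image_cong) (auto simp: inv_mult_group m_assoc)

lemma conjset_one: "S \<subseteq> carrier G \<Longrightarrow> conjset G S \<one> = S"
  unfolding conjset_def by (simp add: subset_iff)

lemma conjset_inv_cancel:
  assumes "S \<subseteq> carrier G" "g \<in> carrier G"
  shows "conjset G (conjset G S g) (inv g) = S"
  using assms by (simp add: conjset_mult conjset_one)

lemma conjset_subgroup_subset:
  assumes "subgroup H G" "S \<subseteq> H" "g \<in> H"
  shows "conjset G S g \<subseteq> H"
  using assms unfolding conjset_def by (auto intro: subgroup.m_closed subgroup.m_inv_closed)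

lemma conjset_subgroup_self:
  assumes "subgroup H G" "g \<in> H"
  shows "conjset G H g = H"
proof
  show "conjset G H g \<subseteq> H" using conjset_subgroup_subset[OF assms(1) order_refl assms(2)] .
  have HG: "H \<subseteq> carrier G" and gG: "g \<in> carrier G" using assms subgroup.subset by blast+
  have "H = conjset G (conjset G H (inv g)) g"
    using conjset_inv_cancel[OF HG, of "inv g"] gG by simp
  also have "\<dots> \<subseteq> conjset G H g"
    using conjset_subgroup_subset[OF assms(1) order_refl, of "inv g"] assms
    unfolding conjset_def by (auto intro: subgroup.m_inv_closed)
  finally show "H \<subseteq> conjset G H g" .
qed

end

locale group_module = group +
  fixes act :: "'v::ab_group_add \<Rightarrow> 'a \<Rightarrow> 'v"
  assumes is_right_module: "right_module G act"
begin

lemma act_one [simp]: "act x \<one> = x"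
  using is_right_module unfolding right_module_def by auto

lemma act_comp: "g \<in> carrier G \<Longrightarrow> h \<in> carrier G \<Longrightarrow> act (act x g) h = act x (g \<otimes> h)"
  using is_right_module unfolding right_module_def by auto

lemma act_add: "g \<in> carrier G \<Longrightarrow> act (x + y) g = act x g + act y g"
  using is_right_module unfolding right_module_def by auto

lemma act_zero [simp]: "g \<in> carrier G \<Longrightarrow> act 0 g = 0"
  using act_add[of g 0 0] by simp

lemma act_minus: "g \<in> carrier G \<Longrightarrow> act (- x) g = - act x g"
  using act_add[of g x "- x"] minus_unique[of "act x g" "act (- x) g"] by simp

lemma act_diff: "g \<in> carrier G \<Longrightarrow> act (x - y) g = act x g - act y g"
  using act_add[of g x "- y"] act_minus[of g y] by simp

lemma act_inv_cancel: "g \<in> carrier G \<Longrightarrow> act (act x g) (inv g) = x"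
  by (simp add: act_comp)

lemma vcomm_mult:
  "a \<in> carrier G \<Longrightarrow> b \<in> carrier G \<Longrightarrow>
   vcomm act w (a \<otimes> b) = vcomm act w a + vcomm act w b + vcomm act (vcomm act w a) b"
  unfolding vcomm_def by (simp add: act_comp[symmetric] act_add act_minus act_diff)

lemma act_vcomm:
  assumes "g \<in> carrier G" "\<alpha> \<in> carrier G"
  shows "act (vcomm act z \<alpha>) g = vcomm act (act z g) (inv g \<otimes> \<alpha> \<otimes> g)"
  using assms unfolding vcomm_def by (simp add: act_add act_minus act_diff act_comp m_assoc[symmetric])

lemma vcent_diff:
  "x \<in> vcent act UNIV S \<Longrightarrow> y \<in> vcent act UNIV S \<Longrightarrow> S \<subseteq> carrier G \<Longrightarrow>
   x - y \<in> vcent act UNIV S"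
  unfolding vcent_def by (auto simp: act_diff subset_iff)

lemma act_in_vcent_conjset:
  assumes "x \<in> vcent act UNIV S" "S \<subseteq> carrier G" "g \<in> carrier G"
  shows "act x g \<in> vcent act UNIV (conjset G S g)"
  unfolding vcent_def conjset_def
proof safe
  fix s assume "s \<in> S"
  then have sG: "s \<in> carrier G" and "act x s = x" using assms(1,2) unfolding vcent_def by auto
  have "act (act x g) (inv g \<otimes> s \<otimes> g) = act x (s \<otimes> g)"
    using sG assms(3) by (simp add: act_comp m_assoc[symmetric])
  also have "\<dots> = act x g" using sG assms(3) \<open>act x s = x\<close> by (simp add: act_comp[symmetric])
  finally show "act (act x g) (inv g \<otimes> s \<otimes> g) = act x g" .
qed simp

lemma stabilizer_subgroup: "subgroup {g \<in> carrier G. act x g = x} G"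
proof (rule subgroupI)
  fix g assume "g \<in> {g \<in> carrier G. act x g = x}"
  then show "inv g \<in> {g \<in> carrier G. act x g = x}"
    using act_inv_cancel[of g x] by auto
qed (auto simp: act_comp[symmetric])

end

locale rank_one = group +
  fixes A B :: "'a set" and bf :: "'a \<Rightarrow> 'a"
  assumes is_rank_one: "rank_one_group G A B bf"
begin

lemma subgroup_A: "subgroup A G" and subgroup_B: "subgroup B G"
  using is_rank_one unfolding rank_one_group_def nilpotent_subgroup_def by auto

lemma A_subset: "A \<subseteq> carrier G" and B_subset: "B \<subseteq> carrier G"
  using subgroup_A subgroup_B subgroup.subset by blast+

lemma generated_by_A_B: "carrier G = generate G (A \<union> B)"
  using is_rank_one unfolding rank_one_group_def by blast

lemma bf_mem: "a \<in> A - {\<one>} \<Longrightarrow> bf a \<in> B - {\<one>}"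
  and conjset_B_eq: "a \<in> A - {\<one>} \<Longrightarrow> conjset G B a = conjset G A (bf a)"
  using is_rank_one unfolding rank_one_group_def by auto

lemma inv_mem_A_nonunit: "a \<in> A - {\<one>} \<Longrightarrow> inv a \<in> A - {\<one>}"
  using subgroup_A A_subset by (auto intro: subgroup.m_inv_closed)

lemma mu_closed: "t \<in> A - {\<one>} \<Longrightarrow> mu G bf t \<in> carrier G"
  unfolding mu_def using bf_mem[of t] bf_mem[OF inv_mem_A_nonunit, of t] A_subset B_subset
  by auto

lemma mu_conj:
  assumes t: "t \<in> A - {\<one>}" and S: "S \<subseteq> carrier G"
  shows "conjset G S (mu G bf t)
           = conjset G (conjset G (conjset G S (bf (inv t))) t) (inv (bf t))"
proof -
  have "bf (inv t) \<in> carrier G" "t \<in> carrier G" "inv (bf t) \<in> carrier G"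
    using t bf_mem[of t] bf_mem[OF inv_mem_A_nonunit, of t] A_subset B_subset by auto
  then show ?thesis using S by (simp add: mu_def conjset_mult conjset_closed)
qed

lemma conjset_A_mu:
  assumes t: "t \<in> A - {\<one>}"
  shows "conjset G A (mu G bf t) = B"
proof -
  have tG: "t \<in> carrier G" and b2: "bf t \<in> B" using t A_subset bf_mem by auto
  have "conjset G A (bf (inv t)) = conjset G B (inv t)"
    using conjset_B_eq[OF inv_mem_A_nonunit[OF t]] by simp
  then show ?thesis
    using mu_conj[OF t A_subset] tG b2 B_subset
    by (simp add: conjset_mult conjset_one conjset_subgroup_self subgroup_B subgroup.m_inv_closed)
qed

lemma conjset_B_mu:
  assumes t: "t \<in> A - {\<one>}"
  shows "conjset G B (mu G bf t) = A"
proof -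
  have b1: "bf (inv t) \<in> B" and b2: "bf t \<in> carrier G"
    using bf_mem[OF inv_mem_A_nonunit[OF t]] bf_mem[OF t] B_subset by auto
  then show ?thesis
    using mu_conj[OF t B_subset] conjset_B_eq[OF t] A_subset
    by (simp add: conjset_subgroup_self subgroup_B conjset_inv_cancel)
qed

lemma generated_by_A_and_nonunit_of_B:
  assumes H: "subgroup H G" and AH: "A \<subseteq> H" and b: "b \<in> B - {\<one>}" "b \<in> H"
  shows "H = carrier G"
proof -
  obtain a where a: "a \<in> A - {\<one>}" "conjset G A b = conjset G B a"
    using is_rank_one b unfolding rank_one_group_def by blast
  have "B = conjset G (conjset G A b) (inv a)"
    using a conjset_inv_cancel[OF B_subset] A_subset by auto
  also have "\<dots> \<subseteq> H"
    using a AH b by (intro conjset_subgroup_subset[OF H] subgroup.m_inv_closed[OF H]) auto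
  finally have "A \<union> B \<subseteq> H" using AH by simp
  then have "generate G (A \<union> B) \<subseteq> H" by (rule generate_subgroup_incl[OF _ H])
  then show ?thesis using generated_by_A_B subgroup.subset[OF H] by blast
qed

end

locale rank_one_module = rank_one + group_module
begin

lemma vcent_A_fixed_by_nonunit_of_B:
  assumes "x \<in> vcent act UNIV A" "b \<in> B - {\<one>}" "act x b = x"
  shows "x \<in> vcent act UNIV (carrier G)"
proof -
  have "{g \<in> carrier G. act x g = x} = carrier G"
    using assms A_subset B_subset unfolding vcent_def
    by (intro generated_by_A_and_nonunit_of_B stabilizer_subgroup) auto
  then show ?thesis unfolding vcent_def by auto
qed

lemma vcomm_B_fixed_by_conj_A0:
  assumes e: "e \<in> A0 act A" and m: "m \<in> carrier G" "conjset G A m = B" and \<beta>: "\<beta> \<in> B"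
  shows "act (vcomm act x \<beta>) (inv m \<otimes> e \<otimes> m) = vcomm act x \<beta>"
proof -
  obtain \<alpha> where \<alpha>: "\<alpha> \<in> A" "\<beta> = inv m \<otimes> \<alpha> \<otimes> m"
    using \<beta> m(2) unfolding conjset_def by auto
  define z where "z = act x (inv m)"
  have x: "x = act z m" unfolding z_def using m(1) by (simp add: act_comp)
  have "vcomm act z \<alpha> \<in> vcomm_set act UNIV A" using \<alpha>(1) by (simp add: vcomm_mem_vcomm_set)
  then have "vcomm act z \<alpha> \<in> vcent act UNIV {e}"
    using e unfolding A0_def vcent_def by auto
  then have "act (vcomm act z \<alpha>) m \<in> vcent act UNIV {inv m \<otimes> e \<otimes> m}"
    using act_in_vcent_conjset[of _ "{e}" m] e m(1) A_subset
    unfolding A0_def conjset_def by auto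
  moreover have "act (vcomm act z \<alpha>) m = vcomm act x \<beta>"
    using act_vcomm[of m \<alpha> z] \<alpha> m(1) A_subset x by auto
  ultimately show ?thesis unfolding vcent_def by auto
qed

lemma rho_h_eq:
  "m \<in> carrier G \<Longrightarrow> x \<in> A - {\<one>} \<Longrightarrow> rho_h G act bf m x v = act (act v m) (mu G bf x)"
  unfolding rho_h_def using mu_closed by (simp add: act_comp)

lemma rho_h_in_vcent_A:
  assumes m: "m \<in> carrier G" and w: "act v m \<in> vcent act UNIV B" and x: "x \<in> A"
  shows "rho_h G act bf m x v \<in> vcent act UNIV A"
proof (cases "x = \<one>")
  case True
  then show ?thesis unfolding rho_h_def vcent_def using A_subset by auto
next
  case False
  then have "x \<in> A - {\<one>}" using x by simp
  then show ?thesis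
    using act_in_vcent_conjset[OF w B_subset mu_closed] conjset_B_mu rho_h_eq m by simp
qed

text \<open>With \<open>b\<^sub>1 = b(x\<^sup>-\<^sup>1)\<close>, \<open>b\<^sub>2 = b(x)\<close> and \<open>w\<close> centralised by \<open>B\<close> we have
  \<open>w\<mu>\<^sub>x = wxb\<^sub>2\<^sup>-\<^sup>1 =: u\<close>, so \<open>[w,x] - w\<mu>\<^sub>x = -w + [u,b\<^sub>2]\<close>.\<close>

lemma vcomm_minus_rho_h_fixed:
  assumes m: "m \<in> carrier G" and w: "act v m \<in> vcent act UNIV B"
    and b0: "b0 \<in> B" and fix_VB: "\<And>z \<beta>. \<beta> \<in> B \<Longrightarrow> act (vcomm act z \<beta>) b0 = vcomm act z \<beta>"
    and x: "x \<in> A"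
  shows "act (vcomm act (act v m) x - rho_h G act bf m x v) b0
           = vcomm act (act v m) x - rho_h G act bf m x v"
proof (cases "x = \<one>")
  case True
  then show ?thesis unfolding vcomm_def rho_h_def using b0 B_subset by auto
next
  case False
  then have x': "x \<in> A - {\<one>}" using x by simp
  define w where "w = act v m"
  define b2 where "b2 = bf x"
  define u where "u = act (act w x) (inv b2)"
  have xG: "x \<in> carrier G" and b0G: "b0 \<in> carrier G" using x b0 A_subset B_subset by auto
  have b1: "bf (inv x) \<in> B" using bf_mem[OF inv_mem_A_nonunit[OF x']] by simp
  have b2: "b2 \<in> B" "b2 \<in> carrier G" using bf_mem[OF x'] B_subset b2_def by auto
  have "act w (mu G bf x) = act (act (act w (bf (inv x))) x) (inv b2)"
    using b1 b2 xG B_subset unfolding mu_def b2_def by (simp add: act_comp subset_iff)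
  also have "act w (bf (inv x)) = w" using w b1 unfolding w_def vcent_def by auto
  finally have "act w (mu G bf x) = u" unfolding u_def .
  then have "vcomm act w x - rho_h G act bf m x v = - w + vcomm act u b2"
    using rho_h_eq[OF m x'] b2 xG unfolding vcomm_def u_def w_def by (simp add: act_comp m_assoc)
  moreover have "act w b0 = w" using w b0 unfolding w_def vcent_def by auto
  ultimately show ?thesis
    using fix_VB[OF b2(1)] b0G unfolding w_def by (simp add: act_diff)
qed

lemma vcomm_vcomm_in_vcent_A:
  assumes VAAA: "vcomm_set act (vcomm_set act (vcomm_set act UNIV A) A) A = {0}"
    and ab: "a \<in> A" "b \<in> A"
  shows "vcomm act (vcomm act w a) b \<in> vcent act UNIV A"
proof -
  have "vcomm act (vcomm act (vcomm act w a) b) \<alpha> = 0" if "\<alpha> \<in> A" for \<alpha>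
  proof -
    have "vcomm act (vcomm act (vcomm act w a) b) \<alpha>
            \<in> vcomm_set act (vcomm_set act (vcomm_set act UNIV A) A) A"
      using ab that by (intro vcomm_mem_vcomm_set) simp_all
    then show ?thesis using VAAA by simp
  qed
  then show ?thesis unfolding vcent_def vcomm_def by (auto simp: add_eq_0_iff)
qed

lemma vcomm_vcomm_mu_eq_rho_h:
  assumes VAAA: "vcomm_set act (vcomm_set act (vcomm_set act UNIV A) A) A = {0}"
    and CVG: "vcent act UNIV (carrier G) = {0}"
    and e_in: "e \<in> A0 act A - {\<one>}" and ab: "a \<in> A" "b \<in> A" and v: "v \<in> vcent act UNIV A"
  shows "vcomm act (vcomm act (act v (mu G bf (inv e))) a) b
         = rho_h G act bf (mu G bf (inv e)) (a \<otimes> b) v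
           - rho_h G act bf (mu G bf (inv e)) a v
           - rho_h G act bf (mu G bf (inv e)) b v"
proof -
  have e: "e \<in> A0 act A" "inv e \<in> A - {\<one>}"
    using e_in inv_mem_A_nonunit[of e] unfolding A0_def by auto
  define m where "m = mu G bf (inv e)"
  have m: "m \<in> carrier G" "conjset G A m = B"
    unfolding m_def using mu_closed conjset_A_mu e(2) by simp_all
  define b0 where "b0 = inv m \<otimes> e \<otimes> m"
  have eG: "e \<in> carrier G" using e(1) A_subset unfolding A0_def by auto
  have "b0 \<noteq> \<one>" unfolding b0_def using eG m(1) e_in by (simp add: m_assoc inv_solve_left')
  moreover have "b0 \<in> B" using e(1) m(2) unfolding b0_def A0_def conjset_def by blast
  ultimately have b0: "b0 \<in> B - {\<one>}" by simp
  have w: "act v m \<in> vcent act UNIV B"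
    using act_in_vcent_conjset[OF v A_subset m(1)] m(2) by simp
  have abA: "a \<otimes> b \<in> A" using subgroup.m_closed[OF subgroup_A ab] .
  define D where "D x = vcomm act (act v m) x - rho_h G act bf m x v" for x
  have D_fixed: "act (D x) b0 = D x" if "x \<in> A" for x
    unfolding D_def b0_def using that m w b0
    by (intro vcomm_minus_rho_h_fixed vcomm_B_fixed_by_conj_A0[OF e(1)]) (auto simp: b0_def)
  define defect where "defect = vcomm act (vcomm act (act v m) a) b
      - (rho_h G act bf m (a \<otimes> b) v - rho_h G act bf m a v - rho_h G act bf m b v)"
  have "defect = D (a \<otimes> b) - D a - D b"
    unfolding defect_def D_def using vcomm_mult[of a b "act v m"] ab A_subset by (auto simp: subset_iff)
  then have "act defect b0 = defect" using D_fixed ab abA b0 B_subset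
    by (auto simp: act_diff subset_iff)
  moreover have "defect \<in> vcent act UNIV A"
    unfolding defect_def using ab abA m(1) w A_subset
    by (intro vcent_diff vcomm_vcomm_in_vcent_A[OF VAAA] rho_h_in_vcent_A) auto
  ultimately have "defect \<in> vcent act UNIV (carrier G)" using b0 vcent_A_fixed_by_nonunit_of_B by blast
  then show ?thesis using CVG unfolding defect_def m_def by simp
qed

end

theorem proposition4p4:
  fixes G :: "('g,'m) monoid_scheme" and A B :: "'g set" and bf :: "'g \<Rightarrow> 'g"
    and act :: "'v::ab_group_add \<Rightarrow> 'g \<Rightarrow> 'v" and e :: 'g
  assumes rk: "rank_one_group G A B bf"
    and md: "right_module G act"
    and VAAA: "vcomm_set act (vcomm_set act (vcomm_set act UNIV A) A) A = {0}"
    and VGGG: "vcomm_set act (vcomm_set act (vcomm_set act UNIV (carrier G)) (carrier G)) (carrier G) \<noteq> {0}"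
    and VG: "vcomm_set act UNIV (carrier G) = UNIV"
    and CVG: "vcent act UNIV (carrier G) = {0}"
    and e_in: "e \<in> A0 act A - {one G}"
    and e_sq: "(\<forall>v::'v. v + v = 0) \<and> (\<exists>x \<in> A. \<exists>y \<in> A. x \<otimes>\<^bsub>G\<^esub> y \<noteq> y \<otimes>\<^bsub>G\<^esub> x)
               \<longrightarrow> (\<exists>a \<in> A. e = a \<otimes>\<^bsub>G\<^esub> a)"
    and ab: "a \<in> A" "b \<in> A"
    and v: "v \<in> vcent act UNIV A"
  shows "vcomm act (vcomm act (act v (mu G bf (inv\<^bsub>G\<^esub> e))) a) b
         = rho_h G act bf (mu G bf (inv\<^bsub>G\<^esub> e)) (a \<otimes>\<^bsub>G\<^esub> b) v
           - rho_h G act bf (mu G bf (inv\<^bsub>G\<^esub> e)) a v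
           - rho_h G act bf (mu G bf (inv\<^bsub>G\<^esub> e)) b v"
proof -
  have "group G" using rk unfolding rank_one_group_def by blast
  then interpret rank_one_module G A B bf act
    using rk md by (simp add: rank_one_module_def rank_one_def rank_one_axioms_def
        group_module_def group_module_axioms_def)
  show ?thesis using vcomm_vcomm_mu_eq_rho_h[OF VAAA CVG e_in ab v] .
qed

end
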